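(* Let $(X,\sigma)$ be a metric-like space and $f:X\to X$. Suppose there is a subset $Y$ with $f(X)\subseteq Y\subseteq X$ such that $(Y,\sigma)$ is complete, and there exist $k\in[0,1)$ and $\rho\in\Omega$ such that $$\int_0^{\sigma(fx,fy)}\rho(t)\,dt\le k\int_0^{\sigma(x,y)}\rho(t)\,dt\quad\text{for all }x,y\in X.$$ Then $f$ has a unique fixed point.
   Context: $\Omega$ is the set of all maps $\rho:[0,\infty)\to[0,\infty)$ that are Lebesgue-integrable on each compact subset of $[0,\infty)$ and satisfy $\int_0^\varepsilon\rho(t)\,dt>0$ for all $\varepsilon>0$. A metric-like space is a pair $(X,\sigma)$ with $X\neq\emptyset$ and $\sigma:X\times X\to[0,\infty)$ such that for all $x,y,z\in X$: $\sigma(x,y)=0\Rightarrow x=y$; $\sigma(x,y)=\sigma(y,x)$; $\sigma(x,y)\le\sigma(x,z)+\sigma(z,y)$. A sequence $\{x_n\}$ is Cauchy iff $\lim_{n,m\to\infty}\sigma(x_n,x_m)$ exists and is finite. $(Y,\sigma)$ is complete if every Cauchy sequence $\{x_n\}$ in $Y$ has some $x\in Y$ with $\lim_{n,m}\sigma(x_n,x_m)=\sigma(x,x)=\lim_n\sigma(x_n,x)$. *)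

theory Defs
  imports "HOL-Analysis.Analysis"
begin

definition Omega :: "(real \<Rightarrow> real) set" where
  "Omega = {\<rho>. (\<forall>t\<ge>0. \<rho> t \<ge> 0)
               \<and> (\<forall>a\<ge>0. set_integrable lborel {0..a} \<rho>)
               \<and> (\<forall>e>0. (LBINT t=0..e. \<rho> t) > 0)}"

definition metric_like :: "'a set \<Rightarrow> ('a \<Rightarrow> 'a \<Rightarrow> real) \<Rightarrow> bool" where
  "metric_like X \<sigma> \<longleftrightarrow> X \<noteq> {}
     \<and> (\<forall>x\<in>X. \<forall>y\<in>X. \<sigma> x y \<ge> 0)
     \<and> (\<forall>x\<in>X. \<forall>y\<in>X. \<sigma> x y = 0 \<longrightarrow> x = y)
     \<and> (\<forall>x\<in>X. \<forall>y\<in>X. \<sigma> x y = \<sigma> y x)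
     \<and> (\<forall>x\<in>X. \<forall>y\<in>X. \<forall>z\<in>X. \<sigma> x y \<le> \<sigma> x z + \<sigma> z y)"

definition ml_cauchy :: "('a \<Rightarrow> 'a \<Rightarrow> real) \<Rightarrow> (nat \<Rightarrow> 'a) \<Rightarrow> bool" where
  "ml_cauchy \<sigma> x \<longleftrightarrow>
     (\<exists>L. ((\<lambda>(n,m). \<sigma> (x n) (x m)) \<longlongrightarrow> L) (sequentially \<times>\<^sub>F sequentially))"

definition ml_complete :: "'a set \<Rightarrow> ('a \<Rightarrow> 'a \<Rightarrow> real) \<Rightarrow> bool" where
  "ml_complete Y \<sigma> \<longleftrightarrow>
     (\<forall>x. (\<forall>n. x n \<in> Y) \<and> ml_cauchy \<sigma> x \<longrightarrow>
        (\<exists>p\<in>Y. ((\<lambda>(n,m). \<sigma> (x n) (x m)) \<longlongrightarrow> \<sigma> p p) (sequentially \<times>\<^sub>F sequentially)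
               \<and> ((\<lambda>n. \<sigma> (x n) p) \<longlonglongrightarrow> \<sigma> p p)))"

end

theory Submission
  imports Defs
begin

text \<open>Write \<open>G s = \<integral>\<^sub>0\<^sup>s \<rho>\<close>. Since \<open>\<rho> \<in> Omega\<close>, \<open>G\<close> is continuous, monotone, and vanishes only
  at \<open>0\<close>, so \<open>G(\<sigma>(x,y))\<close> controls \<open>\<sigma>(x,y)\<close>. Along an orbit \<open>x\<^sub>n = f\<^sup>n a\<close> the consecutive values
  \<open>G(\<sigma>(x\<^sub>n,x\<^sub>n\<^sub>+\<^sub>1)) \<le> k\<^sup>n G(\<sigma>(x\<^sub>0,x\<^sub>1))\<close> tend to \<open>0\<close>. If the orbit were not Cauchy, some
  threshold \<open>e > 0\<close> would be crossed infinitely often, and choosing the first crossing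
  yields pairs with \<open>\<sigma>(x\<^sub>n,x\<^sub>m) \<approx> e \<approx> \<sigma>(x\<^sub>n\<^sub>+\<^sub>1,x\<^sub>m\<^sub>+\<^sub>1)\<close>; the contraction then forces
  \<open>G e \<le> k G e\<close>, contradicting \<open>G e > 0\<close>. Completeness gives a limit \<open>p\<close> with \<open>\<sigma>(p,p) = 0\<close>,
  and the contraction shows \<open>x\<^sub>n \<rightarrow> f p\<close> as well, whence \<open>f p = p\<close>.\<close>

lemma metric_like_nonneg: "metric_like X \<sigma> \<Longrightarrow> x \<in> X \<Longrightarrow> y \<in> X \<Longrightarrow> 0 \<le> \<sigma> x y"
  by (simp add: metric_like_def)

lemma metric_like_eq_0D: "metric_like X \<sigma> \<Longrightarrow> x \<in> X \<Longrightarrow> y \<in> X \<Longrightarrow> \<sigma> x y = 0 \<Longrightarrow> x = y"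
  by (simp add: metric_like_def)

lemma metric_like_sym: "metric_like X \<sigma> \<Longrightarrow> x \<in> X \<Longrightarrow> y \<in> X \<Longrightarrow> \<sigma> x y = \<sigma> y x"
  unfolding metric_like_def by blast

lemma metric_like_triangle:
  "metric_like X \<sigma> \<Longrightarrow> x \<in> X \<Longrightarrow> y \<in> X \<Longrightarrow> z \<in> X \<Longrightarrow> \<sigma> x y \<le> \<sigma> x z + \<sigma> z y"
  unfolding metric_like_def by blast

lemma Omega_integrable_on: "\<rho> \<in> Omega \<Longrightarrow> 0 \<le> s \<Longrightarrow> \<rho> integrable_on {0..s}"
  using set_borel_integral_eq_integral(1) unfolding Omega_def by blast

lemma Omega_LBINT_eq_integral:
  assumes "\<rho> \<in> Omega" "0 \<le> s"
  shows "(LBINT t=0..s. \<rho> t) = integral {0..s} \<rho>"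
proof -
  have "set_integrable lborel {0..s} \<rho>" using assms unfolding Omega_def by auto
  then show ?thesis
    using interval_integral_Icc[of 0 s \<rho>] set_borel_integral_eq_integral(2) assms(2)
    by (simp add: zero_ereal_def)
qed

lemma Omega_integral_nonneg: "\<rho> \<in> Omega \<Longrightarrow> 0 \<le> s \<Longrightarrow> 0 \<le> integral {0..s} \<rho>"
  using Omega_integrable_on by (intro integral_nonneg) (auto simp: Omega_def)

lemma Omega_integral_mono:
  "\<rho> \<in> Omega \<Longrightarrow> 0 \<le> a \<Longrightarrow> a \<le> b \<Longrightarrow> integral {0..a} \<rho> \<le> integral {0..b} \<rho>"
  using Omega_integrable_on[of \<rho> a] Omega_integrable_on[of \<rho> b]
  by (intro integral_subset_le) (auto simp: Omega_def)

lemma Omega_integral_pos: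
  assumes "\<rho> \<in> Omega" "0 < s"
  shows "0 < integral {0..s} \<rho>"
proof -
  have "0 < (LBINT t=0..s. \<rho> t)" using assms unfolding Omega_def by auto
  then show ?thesis using Omega_LBINT_eq_integral[OF assms(1), of s] assms(2) by simp
qed

lemma Omega_integral_tendsto:
  assumes "\<rho> \<in> Omega" "(u \<longlongrightarrow> l) F" "\<forall>\<^sub>F n in F. 0 \<le> u n" "0 \<le> l"
  shows "((\<lambda>n. integral {0..u n} \<rho>) \<longlongrightarrow> integral {0..l} \<rho>) F"
proof -
  have cont: "continuous_on {0..l+1} (\<lambda>s. integral {0..s} \<rho>)"
    using indefinite_integral_continuous_1 Omega_integrable_on[OF assms(1), of "l+1"] assms(4)
    by auto
  have "\<forall>\<^sub>F n in F. u n < l + 1" using assms(2) order_tendstoD(2) by fastforce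
  then have "\<forall>\<^sub>F n in F. u n \<in> {0..l+1}" using assms(3) by eventually_elim auto
  then show ?thesis using continuous_on_tendsto_compose[OF cont assms(2)] assms(4) by auto
qed

lemma Omega_integral_tendsto_0D:
  assumes "\<rho> \<in> Omega" "\<And>n. 0 \<le> u n" "(\<lambda>n. integral {0..u n} \<rho>) \<longlonglongrightarrow> 0"
  shows "u \<longlonglongrightarrow> 0"
proof (rule order_tendstoI)
  fix e :: real assume "0 < e"
  then have "\<forall>\<^sub>F n in sequentially. integral {0..u n} \<rho> < integral {0..e} \<rho>"
    using Omega_integral_pos assms order_tendstoD(2) by blast
  then show "\<forall>\<^sub>F n in sequentially. u n < e"
  proof eventually_elim
    case (elim n)
    then show ?case using Omega_integral_mono[OF assms(1), of e "u n"] \<open>0 < e\<close> by force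
  qed
next
  fix e :: real assume "e < 0"
  then show "\<forall>\<^sub>F n in sequentially. e < u n" using assms(2) by (simp add: less_le_trans)
qed

lemma integral_contraction_fixed_point_unique:
  assumes "metric_like X \<sigma>" "\<rho> \<in> Omega" "k < 1"
    and contr: "integral {0..\<sigma> (f p) (f q)} \<rho> \<le> k * integral {0..\<sigma> p q} \<rho>"
    and "p \<in> X" "q \<in> X" "f p = p" "f q = q"
  shows "p = q"
proof -
  have nonneg: "0 \<le> \<sigma> p q" using metric_like_nonneg[OF assms(1,5,6)] .
  have "integral {0..\<sigma> p q} \<rho> \<le> k * integral {0..\<sigma> p q} \<rho>"
    using contr assms(7,8) by simp
  then have "integral {0..\<sigma> p q} \<rho> \<le> 0"
    using assms(3) Omega_integral_nonneg[OF assms(2) nonneg] by (smt (verit) mult_le_cancel_right1)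
  then have "\<not> 0 < \<sigma> p q" using Omega_integral_pos[OF assms(2)] by force
  then have "\<sigma> p q = 0" using nonneg by linarith
  then show ?thesis by (rule metric_like_eq_0D[OF assms(1,5,6)])
qed

lemma integral_contraction_step_tendsto_0:
  assumes "metric_like X \<sigma>" "\<forall>n. x n \<in> X" "\<rho> \<in> Omega" "0 \<le> k" "k < 1"
    and contr: "\<And>n. integral {0..\<sigma> (x (Suc n)) (x (Suc (Suc n)))} \<rho>
                    \<le> k * integral {0..\<sigma> (x n) (x (Suc n))} \<rho>"
  shows "(\<lambda>n. \<sigma> (x n) (x (Suc n))) \<longlonglongrightarrow> 0"
proof -
  let ?G = "\<lambda>n. integral {0..\<sigma> (x n) (x (Suc n))} \<rho>"
  have nonneg: "0 \<le> \<sigma> (x n) (x (Suc n))" for n using metric_like_nonneg assms(1,2) by metis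
  have bound: "?G n \<le> k ^ n * ?G 0" for n
  proof (induction n)
    case (Suc n)
    have "?G (Suc n) \<le> k * ?G n" by (rule contr)
    also have "\<dots> \<le> k * (k ^ n * ?G 0)" using Suc assms(4) by (rule mult_left_mono)
    finally show ?case by simp
  qed simp
  have geometric: "(\<lambda>n. k ^ n * ?G 0) \<longlonglongrightarrow> 0"
    by (intro tendsto_mult_left_zero LIMSEQ_power_zero) (use assms(4,5) in simp)
  have "?G \<longlonglongrightarrow> 0"
  proof (rule tendsto_sandwich[OF _ _ tendsto_const geometric])
    show "\<forall>\<^sub>F n in sequentially. 0 \<le> ?G n"
      using Omega_integral_nonneg[OF assms(3) nonneg] by (simp add: always_eventually)
    show "\<forall>\<^sub>F n in sequentially. ?G n \<le> k ^ n * ?G 0"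
      using bound by (simp add: always_eventually)
  qed
  then show ?thesis by (rule Omega_integral_tendsto_0D[OF assms(3) nonneg])
qed

text \<open>Take the first \<open>m > n\<close> with \<open>\<sigma>(x\<^sub>n,x\<^sub>m) \<ge> e\<close>: the step before it bounds \<open>\<sigma>(x\<^sub>n,x\<^sub>m)\<close> from
  above, and short steps at both ends bound \<open>\<sigma>(x\<^sub>n\<^sub>+\<^sub>1,x\<^sub>m\<^sub>+\<^sub>1)\<close> from below.\<close>

lemma metric_like_pair_near_threshold:
  assumes ml: "metric_like X \<sigma>" and xX: "\<forall>n. x n \<in> X"
    and step: "(\<lambda>n. \<sigma> (x n) (x (Suc n))) \<longlonglongrightarrow> 0"
    and far: "\<forall>N. \<exists>n\<ge>N. \<exists>m\<ge>N. e \<le> \<sigma> (x n) (x m)"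
    and "0 < \<delta>" "2 * \<delta> \<le> e"
  shows "\<exists>n m. e - 2 * \<delta> \<le> \<sigma> (x (Suc n)) (x (Suc m)) \<and> \<sigma> (x n) (x m) < e + \<delta>"
proof -
  define d where "d n m = \<sigma> (x n) (x m)" for n m
  have sym: "d n m = d m n" for n m using metric_like_sym[OF ml] xX by (simp add: d_def)
  have tri: "d n m \<le> d n j + d j m" for n m j
    using metric_like_triangle[OF ml] xX by (simp add: d_def)
  obtain N where N: "\<And>j. j \<ge> N \<Longrightarrow> d j (Suc j) < \<delta>"
    using order_tendstoD(2)[OF step \<open>0 < \<delta>\<close>] unfolding eventually_sequentially d_def by auto
  obtain n0 m0 where nm0: "n0 \<ge> N" "m0 \<ge> N" "e \<le> d n0 m0"
    using far unfolding d_def by blast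
  have "\<exists>n m. N \<le> n \<and> n < m \<and> e \<le> d n m"
  proof (cases n0 m0 rule: linorder_cases)
    case less
    then show ?thesis using nm0 by blast
  next
    case equal
    have "d n0 n0 < 2 * \<delta>" using tri[of n0 n0 "Suc n0"] N[OF nm0(1)] sym[of "Suc n0" n0] by simp
    then show ?thesis using nm0 equal \<open>2 * \<delta> \<le> e\<close> by simp
  next
    case greater
    then show ?thesis using nm0 sym[of n0 m0] by auto
  qed
  then obtain n m where nm: "N \<le> n" "n < m" "e \<le> d n m" by blast
  define m' where "m' = (LEAST j. n < j \<and> e \<le> d n j)"
  have m': "n < m'" "e \<le> d n m'"
    using LeastI[of "\<lambda>j. n < j \<and> e \<le> d n j" m] nm unfolding m'_def by auto
  have below: "d n j < e" if "n < j" "j < m'" for j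
    using not_less_Least[of j "\<lambda>j. n < j \<and> e \<le> d n j"] that unfolding m'_def[symmetric] by auto
  have "m' \<noteq> Suc n" using m' N[OF nm(1)] \<open>2 * \<delta> \<le> e\<close> \<open>0 < \<delta>\<close> by auto
  then obtain q where q: "m' = Suc q" "n < q" using m' by (cases m') auto
  have upper: "d n m' < e + \<delta>" using tri[of n m' q] below[of q] N[of q] q nm(1) by simp
  have "d n m' \<le> d n (Suc n) + d (Suc n) (Suc m') + d m' (Suc m')"
    using tri[of n m' "Suc n"] tri[of "Suc n" m' "Suc m'"] sym[of "Suc m'" m'] by simp
  moreover have "d n (Suc n) < \<delta>" "d m' (Suc m') < \<delta>" using N[of n] N[of m'] nm m' by auto
  ultimately have "e - 2 * \<delta> \<le> d (Suc n) (Suc m')" using m' by linarith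
  then show ?thesis using upper unfolding d_def by blast
qed

lemma integral_contraction_Cauchy:
  assumes ml: "metric_like X \<sigma>" and xX: "\<forall>n. x n \<in> X"
    and \<rho>: "\<rho> \<in> Omega" and "0 \<le> k" "k < 1"
    and contr: "\<And>n m. integral {0..\<sigma> (x (Suc n)) (x (Suc m))} \<rho>
                      \<le> k * integral {0..\<sigma> (x n) (x m)} \<rho>"
  shows "((\<lambda>(n,m). \<sigma> (x n) (x m)) \<longlongrightarrow> 0) (sequentially \<times>\<^sub>F sequentially)"
proof -
  let ?G = "\<lambda>s. integral {0..s} \<rho>"
  have nonneg: "0 \<le> \<sigma> (x n) (x m)" for n m using metric_like_nonneg ml xX by metis
  have step: "(\<lambda>n. \<sigma> (x n) (x (Suc n))) \<longlonglongrightarrow> 0"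
    using integral_contraction_step_tendsto_0[OF ml xX \<rho> assms(4,5)] contr by blast
  have eventually_small: "\<exists>N. \<forall>n\<ge>N. \<forall>m\<ge>N. \<sigma> (x n) (x m) < e" if "0 < e" for e
  proof (rule ccontr)
    assume "\<not> ?thesis"
    then have far: "\<forall>N. \<exists>n\<ge>N. \<exists>m\<ge>N. e \<le> \<sigma> (x n) (x m)" by (auto simp: not_less)
    have small_\<delta>: "\<forall>\<^sub>F \<delta> in at_right 0. 0 < \<delta> \<and> 2 * \<delta> \<le> e"
      using eventually_at_right_real[of 0 "e / 2"] \<open>0 < e\<close> by (auto elim: eventually_mono)
    have "\<forall>\<^sub>F \<delta> in at_right 0. ?G (e - 2 * \<delta>) \<le> k * ?G (e + \<delta>)"
      using small_\<delta>
    proof eventually_elim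
      case (elim \<delta>)
      then obtain n m where nm: "e - 2 * \<delta> \<le> \<sigma> (x (Suc n)) (x (Suc m))" "\<sigma> (x n) (x m) < e + \<delta>"
        using metric_like_pair_near_threshold[OF ml xX step far] by blast
      have "?G (e - 2 * \<delta>) \<le> ?G (\<sigma> (x (Suc n)) (x (Suc m)))"
        using nm elim by (intro Omega_integral_mono[OF \<rho>]) auto
      also have "\<dots> \<le> k * ?G (\<sigma> (x n) (x m))" by (rule contr)
      also have "\<dots> \<le> k * ?G (e + \<delta>)"
        using nm nonneg \<open>0 \<le> k\<close> by (intro mult_left_mono Omega_integral_mono[OF \<rho>]) auto
      finally show ?case .
    qed
    moreover have "((\<lambda>\<delta>. ?G (e - 2 * \<delta>)) \<longlongrightarrow> ?G e) (at_right 0)"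
      using small_\<delta> \<open>0 < e\<close>
      by (intro Omega_integral_tendsto[OF \<rho>]) (auto intro!: tendsto_eq_intros elim: eventually_mono)
    moreover have "((\<lambda>\<delta>. k * ?G (e + \<delta>)) \<longlongrightarrow> k * ?G e) (at_right 0)"
      using small_\<delta> \<open>0 < e\<close>
      by (intro tendsto_mult_left Omega_integral_tendsto[OF \<rho>])
        (auto intro!: tendsto_eq_intros elim: eventually_mono)
    ultimately have "?G e \<le> k * ?G e" by (intro tendsto_le[OF trivial_limit_at_right_real]) auto
    then show False using Omega_integral_pos[OF \<rho> \<open>0 < e\<close>] \<open>k < 1\<close> by simp
  qed
  show ?thesis
  proof (rule tendstoI)
    fix e :: real assume "0 < e"
    then obtain N where "\<forall>n\<ge>N. \<forall>m\<ge>N. \<sigma> (x n) (x m) < e" using eventually_small by blast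
    then show "\<forall>\<^sub>F nm in sequentially \<times>\<^sub>F sequentially. dist ((\<lambda>(n,m). \<sigma> (x n) (x m)) nm) 0 < e"
      unfolding eventually_prod_sequentially using nonneg by (auto simp: dist_real_def)
  qed
qed

lemma integral_contraction_limit_fixed_point:
  assumes ml: "metric_like X \<sigma>" and \<rho>: "\<rho> \<in> Omega"
    and fX: "f ` X \<subseteq> X" and xX: "\<forall>n. x n \<in> X" and pX: "p \<in> X"
    and orbit: "\<And>n. x (Suc n) = f (x n)"
    and contr: "\<And>y. y \<in> X \<Longrightarrow> integral {0..\<sigma> (f y) (f p)} \<rho> \<le> k * integral {0..\<sigma> y p} \<rho>"
    and lim: "(\<lambda>n. \<sigma> (x n) p) \<longlonglongrightarrow> 0"
  shows "f p = p"
proof -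
  have fpX: "f p \<in> X" using fX pX by auto
  have nonneg_p: "0 \<le> \<sigma> (x n) p" and nonneg_fp: "0 \<le> \<sigma> (x n) (f p)" for n
    using metric_like_nonneg[OF ml] xX pX fpX by auto
  have "(\<lambda>n. integral {0..\<sigma> (x n) p} \<rho>) \<longlonglongrightarrow> integral {0..0} \<rho>"
    using nonneg_p by (intro Omega_integral_tendsto[OF \<rho> lim]) auto
  then have bound_lim: "(\<lambda>n. k * integral {0..\<sigma> (x n) p} \<rho>) \<longlonglongrightarrow> 0"
    using tendsto_mult_right_zero by auto
  have "(\<lambda>n. integral {0..\<sigma> (x (Suc n)) (f p)} \<rho>) \<longlonglongrightarrow> 0"
  proof (rule tendsto_sandwich[OF _ _ tendsto_const bound_lim])
    show "\<forall>\<^sub>F n in sequentially. 0 \<le> integral {0..\<sigma> (x (Suc n)) (f p)} \<rho>"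
      using Omega_integral_nonneg[OF \<rho> nonneg_fp] by (simp add: always_eventually)
    show "\<forall>\<^sub>F n in sequentially.
        integral {0..\<sigma> (x (Suc n)) (f p)} \<rho> \<le> k * integral {0..\<sigma> (x n) p} \<rho>"
      using contr xX orbit by (simp add: always_eventually)
  qed
  then have to_fp: "(\<lambda>n. \<sigma> (x (Suc n)) (f p)) \<longlonglongrightarrow> 0"
    by (rule Omega_integral_tendsto_0D[OF \<rho> nonneg_fp])
  have to_p: "(\<lambda>n. \<sigma> p (x (Suc n))) \<longlonglongrightarrow> 0"
    using LIMSEQ_Suc[OF lim] metric_like_sym[OF ml] xX pX by simp
  have "\<sigma> p (f p) \<le> \<sigma> p (x (Suc n)) + \<sigma> (x (Suc n)) (f p)" for n
    using metric_like_triangle[OF ml pX fpX] xX by simp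
  then have "\<sigma> p (f p) \<le> 0"
    by (intro tendsto_le[OF trivial_limit_sequentially tendsto_add_zero[OF to_p to_fp]
          tendsto_const]) simp
  then show ?thesis using metric_like_nonneg[OF ml pX fpX] metric_like_eq_0D[OF ml pX fpX] by simp
qed

lemma integral_contraction_has_fixed_point:
  assumes ml: "metric_like X \<sigma>" and "f ` X \<subseteq> Y" "Y \<subseteq> X" "ml_complete Y \<sigma>"
    and \<rho>: "\<rho> \<in> Omega" and "0 \<le> k" "k < 1"
    and contr: "\<And>x y. x \<in> X \<Longrightarrow> y \<in> X \<Longrightarrow>
                  integral {0..\<sigma> (f x) (f y)} \<rho> \<le> k * integral {0..\<sigma> x y} \<rho>"
  shows "\<exists>p\<in>X. f p = p"
proof -
  have fX: "f ` X \<subseteq> X" using assms(2,3) by blast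
  have "X \<noteq> {}" using ml by (simp add: metric_like_def)
  then obtain a where "a \<in> X" by blast
  define x where "x n = (f ^^ n) (f a)" for n
  have xY: "\<forall>n. x n \<in> Y"
  proof
    show "x n \<in> Y" for n using \<open>a \<in> X\<close> assms(2,3) by (induction n) (auto simp: x_def)
  qed
  then have xX: "\<forall>n. x n \<in> X" using assms(3) by blast
  have orbit: "x (Suc n) = f (x n)" for n by (simp add: x_def)
  have cauchy: "((\<lambda>(n,m). \<sigma> (x n) (x m)) \<longlongrightarrow> 0) (sequentially \<times>\<^sub>F sequentially)"
    by (rule integral_contraction_Cauchy[OF ml xX \<rho> assms(6,7)]) (simp add: orbit contr xX)
  then have "ml_cauchy \<sigma> x" unfolding ml_cauchy_def by blast
  then obtain p where "p \<in> Y"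
    and lim_pp: "((\<lambda>(n,m). \<sigma> (x n) (x m)) \<longlongrightarrow> \<sigma> p p) (sequentially \<times>\<^sub>F sequentially)"
    and lim: "(\<lambda>n. \<sigma> (x n) p) \<longlonglongrightarrow> \<sigma> p p"
    using assms(4) xY unfolding ml_complete_def by blast
  have "\<sigma> p p = 0" using tendsto_unique[OF _ lim_pp cauchy] by (simp add: prod_filter_eq_bot)
  moreover have pX: "p \<in> X" using \<open>p \<in> Y\<close> assms(3) by blast
  ultimately have "f p = p"
    using integral_contraction_limit_fixed_point[OF ml \<rho> fX xX pX orbit contr[OF _ pX]] lim
    by simp
  with pX show ?thesis by blast
qed

theorem corollary5:
  fixes X Y :: "'a set" and \<sigma> :: "'a \<Rightarrow> 'a \<Rightarrow> real" and f :: "'a \<Rightarrow> 'a"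
    and k :: real and \<rho> :: "real \<Rightarrow> real"
  assumes "metric_like X \<sigma>"
    and "f ` X \<subseteq> Y" and "Y \<subseteq> X"
    and "ml_complete Y \<sigma>"
    and "0 \<le> k" and "k < 1"
    and "\<rho> \<in> Omega"
    and "\<forall>x\<in>X. \<forall>y\<in>X. (LBINT t=0..\<sigma> (f x) (f y). \<rho> t) \<le> k * (LBINT t=0..\<sigma> x y. \<rho> t)"
  shows "\<exists>!p. p \<in> X \<and> f p = p"
proof -
  have contr: "integral {0..\<sigma> (f x) (f y)} \<rho> \<le> k * integral {0..\<sigma> x y} \<rho>"
    if "x \<in> X" "y \<in> X" for x y
  proof -
    have "f x \<in> X" "f y \<in> X" using assms(2,3) that by auto
    then show ?thesis
      using assms(8)[rule_format, OF that]
        Omega_LBINT_eq_integral[OF assms(7) metric_like_nonneg[OF assms(1) \<open>f x \<in> X\<close> \<open>f y \<in> X\<close>]]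
        Omega_LBINT_eq_integral[OF assms(7) metric_like_nonneg[OF assms(1) that]]
      by simp
  qed
  obtain p where p: "p \<in> X" "f p = p"
    using integral_contraction_has_fixed_point[OF assms(1-4,7,5,6) contr] by blast
  have "q = p" if "q \<in> X" "f q = q" for q
    using integral_contraction_fixed_point_unique[OF assms(1,7,6) contr[OF that(1) p(1)] that(1) p(1)]
      that(2) p(2) by simp
  with p show ?thesis by blast
qed

end
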